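(* Let $\gamma$ be a generator of $\mathbb{F}_q^*$. Let $Q(x,y_0,\dots,y_{s-1})=A(x)+\sum_{i=0}^{s-1}A_i(x)y_i$ with $A,A_0,\dots,A_{s-1}\in\mathbb{F}_q[x]$, not all $A_i$ zero. Then the set of all $f\in\mathbb{F}_q[x]$ of degree less than $q-1$ such that $Q\bigl(x,f(x),f(\gamma x),\dots,f(\gamma^{s-1}x)\bigr)=0$ is either empty or an $\mathbb{F}_q$-affine subspace of $\mathbb{F}_q[x]$ of dimension at most $s-1$. *)

theory Defs
  imports "HOL-Computational_Algebra.Polynomial"
begin

lemma vector_space_smult: "vector_space (smult :: 'a::field \<Rightarrow> 'a poly \<Rightarrow> 'a poly)"
  by unfold_locales (auto simp: smult_add_right smult_add_left)

definition poly_affine_subspace_dim_le :: "'a::field poly set \<Rightarrow> nat \<Rightarrow> bool" where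
  "poly_affine_subspace_dim_le S d \<longleftrightarrow>
     (\<exists>f0 V. module.subspace smult V \<and> vector_space.dim smult V \<le> d \<and>
            S = (\<lambda>v. f0 + v) ` V)"

end

theory Submission
  imports Defs
begin

text \<open>
  Let \<open>d\<close> be the least exponent at which some \<open>A\<^sub>i\<close> has a nonzero coefficient and let
  \<open>B(y) = \<Sum>\<^sub>i [x\<^sup>d]A\<^sub>i \<cdot> y\<^sup>i\<close> collect these coefficients; \<open>B\<close> is nonzero of degree at most \<open>s - 1\<close>.
  If \<open>g\<close> lies in the kernel of the linear map \<open>g \<mapsto> \<Sum>\<^sub>i A\<^sub>i(x) g(\<gamma>\<^sup>i x)\<close> and its coefficients
  below \<open>r\<close> vanish, then comparing coefficients at \<open>x^(d+r)\<close> gives \<open>g\<^sub>r B(\<gamma>\<^sup>r) = 0\<close>.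
  Hence a kernel element of degree below \<open>q - 1\<close> is determined by its coefficients at the
  exponents \<open>r < q - 1\<close> with \<open>B(\<gamma>\<^sup>r) = 0\<close>, and since the \<open>\<gamma>\<^sup>r\<close> are distinct there are at most
  \<open>s - 1\<close> of them. The solution set, if nonempty, is a translate of this kernel.
\<close>

lemma (in Vector_Spaces.linear) dim_le_card_if_inj_on:
  assumes "vs1.subspace V" "inj_on f V" "f ` V \<subseteq> vs2.span W" "finite W"
  shows "vs1.dim V \<le> card W"
proof -
  obtain B where B: "B \<subseteq> V" "vs1.independent B" "card B = vs1.dim V"
    using vs1.basis_exists by metis
  have "vs1.span B \<subseteq> V" using B(1) assms(1) by (rule vs1.span_minimal)
  then have inj: "inj_on f (vs1.span B)" by (rule inj_on_subset[OF assms(2)])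
  have "card (f ` B) \<le> card W"
    using vs2.independent_span_bound[OF assms(4) independent_injective_image[OF B(2) inj]]
      B(1) assms(3) by blast
  moreover have "card (f ` B) = card B"
    using inj vs1.span_superset by (auto intro: card_image inj_on_subset)
  ultimately show ?thesis using B(3) by simp
qed

lemma (in Vector_Spaces.linear) solution_set_eq_translate_kernel:
  assumes "vs1.subspace U" "x0 \<in> U" "f x0 = b"
  shows "{x \<in> U. f x = b} = (\<lambda>v. x0 + v) ` {x \<in> U. f x = 0}"
proof (intro set_eqI iffI)
  fix x assume "x \<in> {x \<in> U. f x = b}"
  then have "x - x0 \<in> {x \<in> U. f x = 0}" "x = x0 + (x - x0)"
    using assms by (auto simp: vs1.subspace_diff diff)
  then show "x \<in> (\<lambda>v. x0 + v) ` {x \<in> U. f x = 0}" by blast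
qed (use assms in \<open>auto simp: vs1.subspace_add add\<close>)

lemma subspace_degree_less:
  assumes "0 < n"
  shows "module.subspace smult {f :: 'a::field poly. degree f < n}"
proof -
  interpret vector_space "smult :: 'a \<Rightarrow> 'a poly \<Rightarrow> 'a poly" by (rule vector_space_smult)
  show ?thesis
    using assms by (auto simp: subspace_def intro: le_less_trans[OF degree_add_le_max])
qed

lemma dim_poly_subspace_le_card:
  fixes V :: "'a::field poly set"
  assumes V: "module.subspace smult V" and "finite R"
    and determined: "\<forall>g\<in>V. (\<forall>r\<in>R. coeff g r = 0) \<longrightarrow> g = 0"
  shows "vector_space.dim smult V \<le> card R"
proof -
  interpret vs: vector_space "smult :: 'a \<Rightarrow> 'a poly \<Rightarrow> 'a poly" by (rule vector_space_smult)
  define P where "P g = (\<Sum>r\<in>R. monom (coeff g r) r)" for g :: "'a poly"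
  interpret P: Vector_Spaces.linear "smult :: 'a \<Rightarrow> 'a poly \<Rightarrow> 'a poly" smult P
    by unfold_locales
      (simp_all add: P_def add_monom[symmetric] sum.distrib vs.scale_sum_right smult_monom)
  have coeff_P: "coeff (P g) r = coeff g r" if "r \<in> R" for g r
    using that \<open>finite R\<close> by (simp add: P_def coeff_sum coeff_monom)
  have "inj_on P V"
  proof (rule inj_onI)
    fix g h assume "g \<in> V" "h \<in> V" "P g = P h"
    then have "\<forall>r\<in>R. coeff (g - h) r = 0" by (metis coeff_P coeff_diff diff_self)
    then have "g - h = 0" using vs.subspace_diff[OF V \<open>g \<in> V\<close> \<open>h \<in> V\<close>] determined by blast
    then show "g = h" by simp
  qed
  moreover have "P ` V \<subseteq> vs.span ((\<lambda>r. monom 1 r) ` R)"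
  proof
    fix x assume "x \<in> P ` V"
    then obtain g where x: "x = (\<Sum>r\<in>R. smult (coeff g r) (monom 1 r))"
      by (auto simp: P_def smult_monom)
    have "(\<Sum>r\<in>R. smult (coeff g r) (monom 1 r)) \<in> vs.span ((\<lambda>r. monom 1 r) ` R)"
      by (intro vs.span_sum vs.span_scale vs.span_base) auto
    then show "x \<in> vs.span ((\<lambda>r. monom 1 r) ` R)" by (simp only: x)
  qed
  ultimately have "vs.dim V \<le> card ((\<lambda>r. monom (1::'a) r) ` R)"
    using P.dim_le_card_if_inj_on[OF V] \<open>finite R\<close> by blast
  also have "\<dots> \<le> card R" by (rule card_image_le[OF \<open>finite R\<close>])
  finally show ?thesis .
qed

lemma card_nonzero: "card {y::'a::{finite, zero}. y \<noteq> 0} = card (UNIV :: 'a set) - 1"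
proof -
  have "{y::'a. y \<noteq> 0} = UNIV - {0}" by auto
  then show ?thesis by (simp add: card_Diff_singleton)
qed

lemma generator_order_ge:
  fixes \<gamma> :: "'a::{finite, field}"
  assumes gen: "\<forall>y::'a. y \<noteq> 0 \<longrightarrow> (\<exists>k::nat. y = \<gamma> ^ k)" and "\<gamma> ^ m = 1" "0 < m"
  shows "card (UNIV :: 'a set) - 1 \<le> m"
proof -
  have periodic: "\<gamma> ^ k = \<gamma> ^ (k mod m)" for k
    by (metis \<open>\<gamma> ^ m = 1\<close> div_mult_mod_eq mult.commute mult_1 power_add power_mult power_one)
  have "{y::'a. y \<noteq> 0} \<subseteq> (\<lambda>k. \<gamma> ^ k) ` {..<m}"
  proof
    fix y :: 'a assume "y \<in> {y. y \<noteq> 0}"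
    then obtain k where "y = \<gamma> ^ (k mod m)" using gen periodic by auto
    then show "y \<in> (\<lambda>k. \<gamma> ^ k) ` {..<m}" using \<open>0 < m\<close> by auto
  qed
  then have "card {y::'a. y \<noteq> 0} \<le> card ((\<lambda>k. \<gamma> ^ k) ` {..<m})" by (intro card_mono) auto
  also have "\<dots> \<le> m" using card_image_le[of "{..<m}" "\<lambda>k. \<gamma> ^ k"] by simp
  finally show ?thesis by (simp add: card_nonzero)
qed

lemma inj_on_generator_powers:
  fixes \<gamma> :: "'a::{finite, field}"
  assumes gen: "\<forall>y::'a. y \<noteq> 0 \<longrightarrow> (\<exists>k::nat. y = \<gamma> ^ k)"
  shows "inj_on (\<lambda>r. \<gamma> ^ r) {..<card (UNIV :: 'a set) - 1}"
proof (rule linorder_inj_onI)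
  fix a b assume ab: "a < b" "b \<in> {..<card (UNIV :: 'a set) - 1}"
  show "\<gamma> ^ a \<noteq> \<gamma> ^ b"
  proof
    assume eq: "\<gamma> ^ a = \<gamma> ^ b"
    show False
    proof (cases "\<gamma> = 0")
      case True
      have "{y::'a. y \<noteq> 0} \<subseteq> {1}"
      proof
        fix y :: 'a assume "y \<in> {y. y \<noteq> 0}"
        then obtain k where "y \<noteq> 0" "y = 0 ^ k" using gen True by auto
        then show "y \<in> {1}" by (cases k) auto
      qed
      then have "card {y::'a. y \<noteq> 0} \<le> 1" using card_mono[of "{1::'a}"] by fastforce
      then show False using ab by (simp add: card_nonzero)
    next
      case False
      have "\<gamma> ^ a * \<gamma> ^ (b - a) = \<gamma> ^ b"
        using ab(1) by (simp flip: power_add)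
      then have "\<gamma> ^ a * \<gamma> ^ (b - a) = \<gamma> ^ a * 1" using eq by simp
      then have "\<gamma> ^ (b - a) = 1" using False by simp
      then show False
        using generator_order_ge[OF gen] ab by fastforce
    qed
  qed
qed auto

lemma card_roots_at_generator_powers_le:
  fixes \<gamma> :: "'a::{finite, field}" and B :: "'a poly"
  assumes gen: "\<forall>y::'a. y \<noteq> 0 \<longrightarrow> (\<exists>k::nat. y = \<gamma> ^ k)" and "B \<noteq> 0"
  shows "card {r. r < card (UNIV :: 'a set) - 1 \<and> poly B (\<gamma> ^ r) = 0} \<le> degree B"
proof -
  have "card {r. r < card (UNIV :: 'a set) - 1 \<and> poly B (\<gamma> ^ r) = 0} \<le> card {x. poly B x = 0}"
  proof (rule card_inj_on_le)
    show "inj_on (\<lambda>r. \<gamma> ^ r) {r. r < card (UNIV :: 'a set) - 1 \<and> poly B (\<gamma> ^ r) = 0}"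
      using inj_on_generator_powers[OF gen] by (rule inj_on_subset) auto
  qed (use \<open>B \<noteq> 0\<close> poly_roots_finite in auto)
  also have "\<dots> \<le> degree B" using \<open>B \<noteq> 0\<close> by (rule card_poly_roots_bound)
  finally show ?thesis .
qed

definition dilation_comb :: "(nat \<Rightarrow> 'a::comm_semiring_1 poly) \<Rightarrow> nat \<Rightarrow> 'a \<Rightarrow> 'a poly \<Rightarrow> 'a poly"
  where "dilation_comb As s c g = (\<Sum>i<s. As i * pcompose g [:0, c ^ i:])"

lemma linear_dilation_comb: "Vector_Spaces.linear smult smult (dilation_comb As s c)"
proof -
  interpret vector_space "smult :: 'a::field \<Rightarrow> 'a poly \<Rightarrow> 'a poly" by (rule vector_space_smult)
  show ?thesis
    by unfold_locales
      (simp_all add: dilation_comb_def pcompose_add pcompose_smult distrib_left sum.distrib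
        scale_sum_right)
qed

definition coeff_slice :: "(nat \<Rightarrow> 'a::comm_monoid_add poly) \<Rightarrow> nat \<Rightarrow> nat \<Rightarrow> 'a poly"
  where "coeff_slice As s d = (\<Sum>i<s. monom (coeff (As i) d) i)"

lemma coeff_coeff_slice: "coeff (coeff_slice As s d) i = (if i < s then coeff (As i) d else 0)"
  by (simp add: coeff_slice_def coeff_sum coeff_monom)

lemma degree_coeff_slice_le: "degree (coeff_slice As s d) \<le> s - 1"
  by (rule degree_le) (auto simp: coeff_coeff_slice)

lemma poly_coeff_slice:
  fixes As :: "nat \<Rightarrow> 'a::comm_semiring_1 poly"
  shows "poly (coeff_slice As s d) y = (\<Sum>i<s. coeff (As i) d * y ^ i)"
  by (simp add: coeff_slice_def poly_sum poly_monom)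

lemma exists_lowest_nonzero_coeff_slice:
  assumes "\<exists>i<s. As i \<noteq> 0"
  obtains d where "coeff_slice As s d \<noteq> 0" "\<forall>i<s. \<forall>k<d. coeff (As i) k = 0"
proof -
  have slice_eq_0: "coeff_slice As s k = 0 \<longleftrightarrow> (\<forall>i<s. coeff (As i) k = 0)" for k
    by (auto simp: poly_eq_iff coeff_coeff_slice)
  obtain i where "i < s" "As i \<noteq> 0" using assms by blast
  then have "coeff_slice As s (degree (As i)) \<noteq> 0" by (auto simp: slice_eq_0)
  then have "coeff_slice As s (LEAST d. coeff_slice As s d \<noteq> 0) \<noteq> 0" by (rule LeastI)
  moreover have "\<forall>i<s. \<forall>k<(LEAST d. coeff_slice As s d \<noteq> 0). coeff (As i) k = 0"
    using not_less_Least slice_eq_0 by blast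
  ultimately show ?thesis by (rule that)
qed

lemma coeff_dilation_comb_lowest:
  fixes As :: "nat \<Rightarrow> 'a::comm_ring_1 poly"
  assumes below: "\<forall>i<s. \<forall>k<d. coeff (As i) k = 0" and g: "\<forall>j<r. coeff g j = 0"
  shows "coeff (dilation_comb As s c g) (d + r) = coeff g r * poly (coeff_slice As s d) (c ^ r)"
proof -
  have "coeff (As i * pcompose g [:0, c ^ i:]) (d + r) = coeff (As i) d * ((c ^ i) ^ r * coeff g r)"
    if "i < s" for i
  proof -
    have "coeff (As i * pcompose g [:0, c ^ i:]) (d + r)
        = (\<Sum>k\<le>d + r. coeff (As i) k * ((c ^ i) ^ (d + r - k) * coeff g (d + r - k)))"
      by (simp add: coeff_mult coeff_pcompose_linear)
    also have "\<dots> = (\<Sum>k\<in>{d}. coeff (As i) k * ((c ^ i) ^ (d + r - k) * coeff g (d + r - k)))"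
    proof (rule sum.mono_neutral_right)
      show "\<forall>k\<in>{..d + r} - {d}. coeff (As i) k * ((c ^ i) ^ (d + r - k) * coeff g (d + r - k)) = 0"
      proof
        fix k assume k: "k \<in> {..d + r} - {d}"
        show "coeff (As i) k * ((c ^ i) ^ (d + r - k) * coeff g (d + r - k)) = 0"
        proof (cases "k < d")
          case True then show ?thesis using below \<open>i < s\<close> by simp
        next
          case False then have "d + r - k < r" using k by auto
          then show ?thesis using g by simp
        qed
      qed
    qed auto
    finally show ?thesis by simp
  qed
  then show ?thesis
    by (simp add: dilation_comb_def coeff_sum poly_coeff_slice sum_distrib_left power_mult[symmetric]
        mult.commute mult.left_commute)
qed

lemma dilation_comb_kernel_eq_0:
  fixes As :: "nat \<Rightarrow> 'a::idom poly"
  assumes below: "\<forall>i<s. \<forall>k<d. coeff (As i) k = 0"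
    and kernel: "dilation_comb As s c g = 0" and "degree g < n"
    and at_roots: "\<forall>r<n. poly (coeff_slice As s d) (c ^ r) = 0 \<longrightarrow> coeff g r = 0"
  shows "g = 0"
proof -
  have "coeff g r = 0" for r
  proof (induction r rule: less_induct)
    case (less r)
    show ?case
    proof (cases "r < n \<and> poly (coeff_slice As s d) (c ^ r) \<noteq> 0")
      case True
      have "coeff g r * poly (coeff_slice As s d) (c ^ r) = 0"
        using coeff_dilation_comb_lowest[OF below, where g=g and r=r and c=c] less kernel by simp
      then show ?thesis using True by simp
    next
      case False
      then show ?thesis
        using at_roots \<open>degree g < n\<close> coeff_eq_0[of g r] by (cases "r < n") auto
    qed
  qed
  then show ?thesis by (simp add: poly_eq_iff)
qed

lemma dim_dilation_comb_kernel_le: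
  fixes \<gamma> :: "'a::{finite, field}" and As :: "nat \<Rightarrow> 'a poly"
  assumes gen: "\<forall>y::'a. y \<noteq> 0 \<longrightarrow> (\<exists>k::nat. y = \<gamma> ^ k)" and nz: "\<exists>i<s. As i \<noteq> 0"
  defines "K \<equiv> {g. degree g < card (UNIV :: 'a set) - 1 \<and> dilation_comb As s \<gamma> g = 0}"
  shows "vector_space.dim smult K \<le> s - 1"
proof -
  interpret lin: Vector_Spaces.linear "smult :: 'a \<Rightarrow> 'a poly \<Rightarrow> 'a poly" smult "dilation_comb As s \<gamma>"
    by (rule linear_dilation_comb)
  obtain d where slice: "coeff_slice As s d \<noteq> 0" and below: "\<forall>i<s. \<forall>k<d. coeff (As i) k = 0"
    using exists_lowest_nonzero_coeff_slice[OF nz] by blast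
  define R where "R = {r. r < card (UNIV :: 'a set) - 1 \<and> poly (coeff_slice As s d) (\<gamma> ^ r) = 0}"
  have "1 < card (UNIV :: 'a set)"
    using card_mono[of UNIV "{0::'a, 1}"] by simp
  then have "lin.vs1.subspace K"
    unfolding K_def using lin.vs1.subspace_inter[OF subspace_degree_less lin.subspace_kernel]
    by (simp add: Int_def)
  moreover have "\<forall>g\<in>K. (\<forall>r\<in>R. coeff g r = 0) \<longrightarrow> g = 0"
    using dilation_comb_kernel_eq_0[OF below] by (auto simp: K_def R_def)
  ultimately have "lin.vs1.dim K \<le> card R"
    by (intro dim_poly_subspace_le_card) (auto simp: R_def)
  also have "\<dots> \<le> s - 1"
    using card_roots_at_generator_powers_le[OF gen slice] degree_coeff_slice_le
    unfolding R_def by (rule le_trans)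
  finally show ?thesis .
qed

theorem lemmaE8:
  fixes \<gamma> :: "'a::{finite, field}"
    and A :: "'a poly" and As :: "nat \<Rightarrow> 'a poly" and s :: nat
  assumes gen: "\<forall>y::'a. y \<noteq> 0 \<longrightarrow> (\<exists>k::nat. y = \<gamma> ^ k)"
    and nz: "\<exists>i<s. As i \<noteq> 0"
  shows "let S = {f :: 'a poly. degree f < card (UNIV :: 'a set) - 1 \<and>
                    A + (\<Sum>i<s. As i * pcompose f [:0, \<gamma> ^ i:]) = 0}
         in S = {} \<or> poly_affine_subspace_dim_le S (s - 1)"
proof -
  interpret lin: Vector_Spaces.linear "smult :: 'a \<Rightarrow> 'a poly \<Rightarrow> 'a poly" smult "dilation_comb As s \<gamma>"
    by (rule linear_dilation_comb)
  define U where "U = {f :: 'a poly. degree f < card (UNIV :: 'a set) - 1}"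
  define S where "S = {f \<in> U. dilation_comb As s \<gamma> f = - A}"
  have "S = {} \<or> poly_affine_subspace_dim_le S (s - 1)"
  proof (cases "S = {}")
    case False
    then obtain f0 where f0: "f0 \<in> U" "dilation_comb As s \<gamma> f0 = - A" by (auto simp: S_def)
    then have U: "lin.vs1.subspace U" unfolding U_def by (intro subspace_degree_less) auto
    have "S = (\<lambda>v. f0 + v) ` {f \<in> U. dilation_comb As s \<gamma> f = 0}"
      unfolding S_def by (rule lin.solution_set_eq_translate_kernel[OF U f0])
    moreover have "lin.vs1.subspace {f \<in> U. dilation_comb As s \<gamma> f = 0}"
      using lin.vs1.subspace_inter[OF U lin.subspace_kernel] by (simp add: Int_def)
    moreover have "lin.vs1.dim {f \<in> U. dilation_comb As s \<gamma> f = 0} \<le> s - 1"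
      using dim_dilation_comb_kernel_le[OF gen nz] by (simp add: U_def)
    ultimately show ?thesis unfolding poly_affine_subspace_dim_le_def by blast
  qed simp
  then show ?thesis
    by (simp add: S_def U_def dilation_comb_def eq_neg_iff_add_eq_0 add.commute)
qed

end
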